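(* Let $q=p^k$ be an odd prime power ($p$ prime, $k\ge1$), and let $S$ be a Sylow $p$-subgroup of the symmetric group on $q$ points. Then for every element $s\in S$, there is a complete mapping $f$ of $\mathbb{F}_q$ with $\operatorname{CT}(f)=\operatorname{CT}(s)$.
   Context: A complete mapping of the field $\mathbb{F}_q$ is a permutation $f$ of $\mathbb{F}_q$ such that $x\mapsto f(x)+x$ is also a permutation of $\mathbb{F}_q$. The cycle type $\operatorname{CT}(\sigma)$ of a permutation $\sigma$ of a finite set $\Omega$ is the monomial $x_1^{k_1}\cdots x_{|\Omega|}^{k_{|\Omega|}}$, where $k_\ell$ is the number of cycles of length $\ell$ of $\sigma$. *)

theory Defs
  imports "HOL-Algebra.Sym_Groups" "HOL-Combinatorics.Orbits"
    "HOL-Computational_Algebra.Primes"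
begin

definition complete_mapping :: "('a::field \<Rightarrow> 'a) \<Rightarrow> bool" where
  "complete_mapping f \<longleftrightarrow> f permutes UNIV \<and> (\<lambda>x. f x + x) permutes UNIV"

definition cycle_type :: "('a \<Rightarrow> 'a) \<Rightarrow> 'a set \<Rightarrow> nat \<Rightarrow> nat" where
  "cycle_type \<sigma> \<Omega> l = card {orbit \<sigma> x | x. x \<in> \<Omega> \<and> card (orbit \<sigma> x) = l}"

definition sylow_subgroup :: "('g, 'b) monoid_scheme \<Rightarrow> nat \<Rightarrow> 'g set \<Rightarrow> bool" where
  "sylow_subgroup G p S \<longleftrightarrow> subgroup S G \<and> card S = p ^ multiplicity p (order G)"

end

(*
  The cycle lengths of an element of a p-subgroup of the symmetric group on q = p^k points
  are powers of p summing to q. Conversely, every multiset M of powers of p with sum p^m is the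
  cycle type of a complete mapping of the additive group (Z/p)^m, by induction on m. If
  M = {p^m}, a complete p^(m-1)-cycle g lifts to the p^m-cycle (i, x) |-> (i + 1, x) for i /= 0,
  (0, x) |-> (1, g x). Otherwise every part is at most p^(m-1), so M splits into p multisets of
  sum p^(m-1); complete mappings G_i realising them combine to (i, x) |-> (i, G_i x). Both maps
  are complete because doubling is injective modulo the odd number p. Finally F_q is additively
  isomorphic to (Z/p)^k, and conjugation by the isomorphism transports complete mappings and
  cycle types.
*)
theory Submission
  imports Defs "HOL-Number_Theory.Residues"
begin

section \<open>Cycle types\<close>

lemma cycle_type_altdef:
  "cycle_type \<sigma> \<Omega> l = card (orbit \<sigma> ` {x \<in> \<Omega>. card (orbit \<sigma> x) = l})"
  unfolding cycle_type_def by (simp add: setcompr_eq_image)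

lemma permutes_self_in_orbit: "g permutes A \<Longrightarrow> finite A \<Longrightarrow> x \<in> orbit g x"
  by (rule permutation_self_in_orbit) (auto simp: permutation_permutes)

lemma permutes_finiteI:
  assumes "finite A" "\<And>x. x \<in> A \<Longrightarrow> g x \<in> A" "\<And>x. x \<notin> A \<Longrightarrow> g x = x" "inj_on g A"
  shows "g permutes A"
proof (rule bij_imp_permutes)
  have "g ` A = A" using assms by (intro endo_inj_surj) auto
  then show "bij_betw g A A" using assms(4) by (simp add: bij_betw_def)
qed (use assms(3) in blast)

lemma orbit_conj:
  assumes g: "g permutes A" "finite A" and "x \<in> A"
    and conj: "\<And>y. y \<in> A \<Longrightarrow> g' (h y) = h (g y)"
  shows "orbit g' (h x) = h ` orbit g x"
  using orbit_inverse[OF permutes_self_in_orbit[OF g], of x g' h]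
    permutes_orbit_subset[OF g(1) \<open>x \<in> A\<close>] conj
  by blast

lemma cycle_type_conj:
  assumes g: "g permutes A" "finite A" and h: "bij_betw h A B"
    and conj: "\<And>x. x \<in> A \<Longrightarrow> g' (h x) = h (g x)"
  shows "cycle_type g' B = cycle_type g A"
proof
  fix l
  have orbit_sub: "orbit g x \<subseteq> A" if "x \<in> A" for x
    using permutes_orbit_subset[OF g(1) that] .
  have orbit_h: "orbit g' (h x) = h ` orbit g x" if "x \<in> A" for x
    by (rule orbit_conj[OF g that]) (rule conj)
  have inj: "inj_on h A" using h by (simp add: bij_betw_def)
  have card_h: "card (orbit g' (h x)) = card (orbit g x)" if "x \<in> A" for x
    using orbit_h[OF that] card_image inj_on_subset[OF inj orbit_sub[OF that]] by metis
  define C where "C = {x \<in> A. card (orbit g x) = l}"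
  have "{y \<in> B. card (orbit g' y) = l} = h ` C"
    using h card_h by (auto simp: bij_betw_def C_def)
  then have "orbit g' ` {y \<in> B. card (orbit g' y) = l} = image h ` orbit g ` C"
    using orbit_h by (auto simp: C_def image_image intro!: image_cong)
  moreover have "inj_on (image h) (orbit g ` C)"
    by (rule inj_on_subset[OF inj_on_image_Pow[OF inj]]) (use orbit_sub in \<open>auto simp: C_def\<close>)
  ultimately show "cycle_type g' B l = cycle_type g A l"
    by (simp add: cycle_type_altdef card_image C_def)
qed

lemma cycle_type_UN:
  assumes "finite I" and disj: "disjoint_family_on B I" and fin: "\<And>i. i \<in> I \<Longrightarrow> finite (B i)"
    and inv: "\<And>i x. i \<in> I \<Longrightarrow> x \<in> B i \<Longrightarrow> x \<in> orbit f x \<and> orbit f x \<subseteq> B i"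
  shows "cycle_type f (\<Union>i\<in>I. B i) l = (\<Sum>i\<in>I. cycle_type f (B i) l)"
proof -
  define F where "F i = orbit f ` {x \<in> B i. card (orbit f x) = l}" for i
  have fin_F: "\<forall>i\<in>I. finite (F i)" using fin by (simp add: F_def)
  have disj_F: "\<forall>i\<in>I. \<forall>j\<in>I. i \<noteq> j \<longrightarrow> F i \<inter> F j = {}"
  proof (intro ballI impI)
    fix i j assume ij: "i \<in> I" "j \<in> I" "i \<noteq> j"
    show "F i \<inter> F j = {}"
    proof (rule ccontr)
      assume "F i \<inter> F j \<noteq> {}"
      then obtain x y where "x \<in> B i" "y \<in> B j" "orbit f x = orbit f y" unfolding F_def by blast
      then have "x \<in> B i \<inter> B j" using inv ij by blast
      then show False using disj ij unfolding disjoint_family_on_def by blast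
    qed
  qed
  have "orbit f ` {x \<in> (\<Union>i\<in>I. B i). card (orbit f x) = l} = (\<Union>i\<in>I. F i)"
    unfolding F_def by blast
  then show ?thesis
    using card_UN_disjoint[OF \<open>finite I\<close> fin_F disj_F] by (simp add: cycle_type_altdef F_def)
qed

lemma cycle_type_cyclic_on:
  assumes "cyclic_on g A"
  shows "cycle_type g A = count {#card A#}"
proof
  fix l
  have "A \<noteq> {}" using assms by (auto simp: cyclic_on_def)
  moreover have "orbit g x = A" if "x \<in> A" for x using orbit_cyclic_eq3[OF assms that] .
  ultimately have "{orbit g x |x. x \<in> A \<and> card (orbit g x) = l} = (if l = card A then {A} else {})"
    by auto
  then show "cycle_type g A l = count {#card A#} l" by (simp add: cycle_type_def)
qed

definition cycle_type_mset :: "('a \<Rightarrow> 'a) \<Rightarrow> 'a set \<Rightarrow> nat multiset" where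
  "cycle_type_mset \<sigma> A = image_mset card (mset_set (orbit \<sigma> ` A))"

lemma count_cycle_type_mset:
  assumes "finite A"
  shows "count (cycle_type_mset \<sigma> A) = cycle_type \<sigma> A"
proof
  fix l
  have "count (cycle_type_mset \<sigma> A) l = card (card -` {l} \<inter> orbit \<sigma> ` A)"
    using assms by (simp add: cycle_type_mset_def count_image_mset)
  also have "card -` {l} \<inter> orbit \<sigma> ` A = {orbit \<sigma> x |x. x \<in> A \<and> card (orbit \<sigma> x) = l}"
    by blast
  finally show "count (cycle_type_mset \<sigma> A) l = cycle_type \<sigma> A l" unfolding cycle_type_def .
qed

lemma set_mset_cycle_type_mset:
  "finite A \<Longrightarrow> set_mset (cycle_type_mset \<sigma> A) = (\<lambda>x. card (orbit \<sigma> x)) ` A"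
  by (auto simp: cycle_type_mset_def)

lemma sum_cycle_type_mset:
  assumes \<sigma>: "\<sigma> permutes A" and "finite A"
  shows "sum_mset (cycle_type_mset \<sigma> A) = card A"
proof -
  have perm: "permutation \<sigma>" using assms permutation_permutes by blast
  have "disjoint (orbit \<sigma> ` A)"
  proof (rule disjointI)
    fix U W assume "U \<in> orbit \<sigma> ` A" "W \<in> orbit \<sigma> ` A" "U \<noteq> W"
    then show "U \<inter> W = {}"
      using orbit_cyclic_eq3[OF cyclic_on_orbit'[OF perm]] by blast
  qed
  moreover have "finite U" if "U \<in> orbit \<sigma> ` A" for U
    using that permutes_orbit_subset[OF \<sigma>] \<open>finite A\<close> finite_subset by blast
  ultimately have "sum_mset (cycle_type_mset \<sigma> A) = card (\<Union> (orbit \<sigma> ` A))"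
    using \<open>finite A\<close> by (simp add: cycle_type_mset_def sum_unfold_sum_mset card_Union_disjoint)
  also have "\<Union> (orbit \<sigma> ` A) = A"
    using permutes_orbit_subset[OF \<sigma>] permutation_self_in_orbit[OF perm] by blast
  finally show ?thesis .
qed

section \<open>Cycle lengths of elements of \<open>p\<close>-subgroups\<close>

lemma card_orbit_eq_least_power:
  assumes "permutation f"
  shows "card (orbit f x) = least_power f x"
proof -
  have "orbit f x = set (support f x)"
    using orbit_altdef_permutation[OF assms] support_set[OF assms] by auto
  moreover have "card (set (support f x)) = length (support f x)"
    using cycle_of_permutation[OF assms] distinct_card by blast
  ultimately show ?thesis by simp
qed

lemma card_orbit_dvd:
  "permutation f \<Longrightarrow> (f ^^ n) x = x \<Longrightarrow> card (orbit f x) dvd n"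
  by (simp add: card_orbit_eq_least_power least_power_minimal)

lemma subgroup_sym_group_funpow_card:
  assumes "subgroup S (sym_group n)" "s \<in> S"
  shows "s ^^ card S = id"
proof -
  let ?H = "(sym_group n)\<lparr>carrier := S\<rparr>"
  have "group ?H" by (rule subgroup.subgroup_is_group[OF assms(1) sym_group_is_group])
  moreover have "x [^]\<^bsub>?H\<^esub> m = x ^^ m" for x and m :: nat
    by (induction m) (simp_all add: sym_group_def funpow_swap1)
  ultimately show ?thesis
    using group.pow_order_eq_1[of ?H s] assms(2) by (simp add: order_def sym_group_def)
qed

lemma sylow_card_orbit_prime_power:
  assumes "prime p" "sylow_subgroup (sym_group n) p S" "s \<in> S"
  shows "\<exists>j. card (orbit s x) = p ^ j"
proof -
  have S: "subgroup S (sym_group n)" and card_S: "card S = p ^ multiplicity p (order (sym_group n))"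
    using assms(2) by (auto simp: sylow_subgroup_def)
  have "permutation s"
    using subgroup.subset[OF S] assms(3) sym_group_carrier' by blast
  moreover have "(s ^^ card S) x = x"
    using subgroup_sym_group_funpow_card[OF S assms(3)] by simp
  ultimately have "card (orbit s x) dvd p ^ multiplicity p (order (sym_group n))"
    using card_orbit_dvd card_S by metis
  then show ?thesis using divides_primepow_nat[OF assms(1)] by blast
qed

section \<open>Complete mappings\<close>

definition complete_mapping_on :: "('a \<Rightarrow> 'a \<Rightarrow> 'a) \<Rightarrow> 'a set \<Rightarrow> ('a \<Rightarrow> 'a) \<Rightarrow> bool" where
  "complete_mapping_on addop A g \<longleftrightarrow> g permutes A \<and> bij_betw (\<lambda>x. addop (g x) x) A A"

lemma complete_mapping_onD:
  assumes "complete_mapping_on addop A g"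
  shows "g permutes A" and "inj_on (\<lambda>x. addop (g x) x) A"
  using assms by (auto simp: complete_mapping_on_def bij_betw_imp_inj_on)

lemma complete_mapping_transfer:
  fixes \<phi> :: "'b \<Rightarrow> 'a::field"
  assumes \<phi>: "bij_betw \<phi> A UNIV" and "finite A"
    and add: "\<And>x y. x \<in> A \<Longrightarrow> y \<in> A \<Longrightarrow> \<phi> (addop x y) = \<phi> x + \<phi> y"
    and g: "complete_mapping_on addop A g"
  defines "f \<equiv> \<phi> \<circ> g \<circ> inv_into A \<phi>"
  shows "complete_mapping f" and "cycle_type f UNIV = cycle_type g A"
proof -
  let ?\<psi> = "inv_into A \<phi>"
  have \<psi>: "bij_betw ?\<psi> UNIV A" using bij_betw_inv_into[OF \<phi>] .
  have \<psi>\<phi>: "?\<psi> (\<phi> x) = x" if "x \<in> A" for x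
    using \<phi> that by (simp add: bij_betw_def inv_into_f_f)
  have \<phi>\<psi>: "\<phi> (?\<psi> a) = a" for a using \<phi> by (simp add: bij_betw_inv_into_right)
  have g_perm: "g permutes A" and g_add: "bij_betw (\<lambda>x. addop (g x) x) A A"
    using g by (simp_all add: complete_mapping_on_def)
  have "bij f"
    unfolding f_def using bij_betw_trans[OF bij_betw_trans[OF \<psi> permutes_imp_bij[OF g_perm]] \<phi>]
    by (simp add: comp_assoc)
  moreover have "(\<lambda>x. f x + x) = \<phi> \<circ> (\<lambda>x. addop (g x) x) \<circ> ?\<psi>"
  proof
    fix a
    have "?\<psi> a \<in> A" using \<psi> bij_betwE by blast
    then show "f a + a = (\<phi> \<circ> (\<lambda>x. addop (g x) x) \<circ> ?\<psi>) a"
      using add permutes_in_image[OF g_perm] \<phi>\<psi>[of a] by (simp add: f_def)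
  qed
  then have "bij (\<lambda>x. f x + x)"
    using bij_betw_trans[OF bij_betw_trans[OF \<psi> g_add] \<phi>] by (simp add: comp_assoc)
  ultimately show "complete_mapping f"
    by (auto simp: complete_mapping_def intro: bij_imp_permutes)
  show "cycle_type f UNIV = cycle_type g A"
    using \<open>finite A\<close> by (rule cycle_type_conj[OF g_perm _ \<phi>]) (simp add: f_def \<psi>\<phi>)
qed

text \<open>Vectors of \<open>(\<int>/p)\<^sup>m\<close> are lists of residues \<open>0, \<dots>, p - 1\<close>; the head of a vector of
  length \<open>m + 1\<close> is its coordinate in the first factor of \<open>\<int>/p \<times> (\<int>/p)\<^sup>m\<close>.\<close>

definition vecs :: "nat \<Rightarrow> nat \<Rightarrow> nat list set" where
  "vecs p m = {xs. length xs = m \<and> set xs \<subseteq> {..<p}}"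

definition vadd :: "nat \<Rightarrow> nat list \<Rightarrow> nat list \<Rightarrow> nat list" where
  "vadd p xs ys = map2 (\<lambda>a b. (a + b) mod p) xs ys"

lemma finite_vecs: "finite (vecs p m)"
  unfolding vecs_def using finite_lists_length_eq[of "{..<p}" m] by (simp add: conj_commute)

lemma card_vecs: "card (vecs p m) = p ^ m"
  unfolding vecs_def using card_lists_length_eq[of "{..<p}" m] by (simp add: conj_commute)

lemma vecs_0: "vecs p 0 = {[]}"
  by (auto simp: vecs_def)

lemma Cons_in_vecs [simp]: "i # xs \<in> vecs p (Suc m) \<longleftrightarrow> i < p \<and> xs \<in> vecs p m"
  by (auto simp: vecs_def)

lemma vecs_SucE:
  assumes "x \<in> vecs p (Suc m)"
  obtains i xs where "x = i # xs" "i < p" "xs \<in> vecs p m"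
  using assms by (cases x) (auto simp: vecs_def)

lemma vecs_Suc: "vecs p (Suc m) = (\<Union>i<p. Cons i ` vecs p m)"
  by (auto elim!: vecs_SucE)

lemma replicate_in_vecs: "0 < p \<Longrightarrow> replicate m 0 \<in> vecs p m"
  by (auto simp: vecs_def)

lemma vadd_Cons [simp]: "vadd p (a # xs) (b # ys) = ((a + b) mod p) # vadd p xs ys"
  by (simp add: vadd_def)

lemma vadd_replicate_0: "vadd p (replicate m 0) (replicate m 0) = replicate m 0"
  by (induction m) (simp_all add: vadd_def)

lemma vadd_in_vecs: "0 < p \<Longrightarrow> xs \<in> vecs p m \<Longrightarrow> ys \<in> vecs p m \<Longrightarrow> vadd p xs ys \<in> vecs p m"
  by (auto simp: vecs_def vadd_def set_zip)

lemma inj_on_vecs_SucI: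
  assumes "\<And>i j xs ys. i < p \<Longrightarrow> j < p \<Longrightarrow> xs \<in> vecs p m \<Longrightarrow> ys \<in> vecs p m \<Longrightarrow>
      f (i # xs) = f (j # ys) \<Longrightarrow> i = j \<and> xs = ys"
  shows "inj_on f (vecs p (Suc m))"
  by (rule inj_onI) (metis assms vecs_SucE)

lemma mod_add_right_inj: "(a::nat) < p \<Longrightarrow> b < p \<Longrightarrow> (a + c) mod p = (b + c) mod p \<Longrightarrow> a = b"
  by (metis cong_def cong_add_rcancel_nat cong_less_modulus_unique_nat)

lemma odd_mod_double_add_inj:
  assumes "odd p" "(a::nat) < p" "b < p" "(2 * a + c) mod p = (2 * b + c) mod p"
  shows "a = b"
proof -
  have "[2 * a = 2 * b] (mod p)" using assms(4) by (metis cong_def cong_add_rcancel_nat)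
  then have "[a = b] (mod p)" using assms(1) by (simp add: cong_mult_lcancel_nat)
  then show ?thesis using assms(2,3) by (rule cong_less_modulus_unique_nat)
qed

lemma vadd_self_inj:
  assumes "odd p" "xs \<in> vecs p m" "ys \<in> vecs p m" "vadd p xs xs = vadd p ys ys"
  shows "xs = ys"
  using assms(2-4)
proof (induction m arbitrary: xs ys)
  case 0 then show ?case by (simp add: vecs_0)
next
  case (Suc m)
  from Suc.prems(1) obtain a xs' where "xs = a # xs'" "a < p" "xs' \<in> vecs p m" by (rule vecs_SucE)
  moreover from Suc.prems(2) obtain b ys' where "ys = b # ys'" "b < p" "ys' \<in> vecs p m"
    by (rule vecs_SucE)
  ultimately show ?case
    using Suc odd_mod_double_add_inj[OF assms(1), of a b 0] by (auto simp: mult_2)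
qed

lemma complete_mapping_on_vecsI:
  assumes "0 < p" "g permutes vecs p m" "inj_on (\<lambda>x. vadd p (g x) x) (vecs p m)"
  shows "complete_mapping_on (vadd p) (vecs p m) g"
proof -
  have "(\<lambda>x. vadd p (g x) x) ` vecs p m = vecs p m"
    using assms finite_vecs vadd_in_vecs[OF assms(1)] permutes_in_image[OF assms(2)]
    by (intro endo_inj_surj) auto
  then show ?thesis using assms(2,3) by (simp add: complete_mapping_on_def bij_betw_def)
qed

definition fibre_map :: "nat \<Rightarrow> nat \<Rightarrow> (nat \<Rightarrow> nat list \<Rightarrow> nat list) \<Rightarrow> nat list \<Rightarrow> nat list" where
  "fibre_map p m G x = (if x \<in> vecs p (Suc m) then hd x # G (hd x) (tl x) else x)"

lemma fibre_map_Cons [simp]: "i < p \<Longrightarrow> xs \<in> vecs p m \<Longrightarrow> fibre_map p m G (i # xs) = i # G i xs"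
  by (simp add: fibre_map_def)

lemma permutes_fibre_map:
  assumes G: "\<And>i. i < p \<Longrightarrow> G i permutes vecs p m"
  shows "fibre_map p m G permutes vecs p (Suc m)"
proof (rule permutes_finiteI[OF finite_vecs])
  show "fibre_map p m G x \<in> vecs p (Suc m)" if "x \<in> vecs p (Suc m)" for x
    by (rule vecs_SucE[OF that]) (simp add: G permutes_in_image)
  show "fibre_map p m G x = x" if "x \<notin> vecs p (Suc m)" for x
    using that by (simp add: fibre_map_def)
  show "inj_on (fibre_map p m G) (vecs p (Suc m))"
  proof (rule inj_on_vecs_SucI)
    fix i j xs ys
    assume i: "i < p" "xs \<in> vecs p m" and j: "j < p" "ys \<in> vecs p m"
      and "fibre_map p m G (i # xs) = fibre_map p m G (j # ys)"
    then have "i = j" "G i xs = G i ys" by auto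
    then show "i = j \<and> xs = ys"
      using inj_onD[OF permutes_inj_on[OF G[OF i(1)]]] i(2) j(2) by blast
  qed
qed

lemma complete_mapping_fibre_map:
  assumes "odd p" and G: "\<And>i. i < p \<Longrightarrow> complete_mapping_on (vadd p) (vecs p m) (G i)"
  shows "complete_mapping_on (vadd p) (vecs p (Suc m)) (fibre_map p m G)"
proof (rule complete_mapping_on_vecsI)
  show "0 < p" using \<open>odd p\<close> by (simp add: odd_pos)
  show "fibre_map p m G permutes vecs p (Suc m)"
    using complete_mapping_onD(1)[OF G] by (rule permutes_fibre_map)
  show "inj_on (\<lambda>x. vadd p (fibre_map p m G x) x) (vecs p (Suc m))"
  proof (rule inj_on_vecs_SucI)
    fix i j xs ys
    assume i: "i < p" "xs \<in> vecs p m" and j: "j < p" "ys \<in> vecs p m"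
      and "vadd p (fibre_map p m G (i # xs)) (i # xs) = vadd p (fibre_map p m G (j # ys)) (j # ys)"
    then have "(2 * i + 0) mod p = (2 * j + 0) mod p"
      and tail: "vadd p (G i xs) xs = vadd p (G j ys) ys"
      by (simp_all add: mult_2)
    then have "i = j" using odd_mod_double_add_inj[OF \<open>odd p\<close> i(1) j(1)] by blast
    with tail have "vadd p (G i xs) xs = vadd p (G i ys) ys" by simp
    then have "xs = ys" using inj_onD[OF complete_mapping_onD(2)[OF G[OF i(1)]]] i(2) j(2) by blast
    with \<open>i = j\<close> show "i = j \<and> xs = ys" ..
  qed
qed

lemma cycle_type_fibre_map:
  assumes perm: "\<And>i. i < p \<Longrightarrow> G i permutes vecs p m"
  shows "cycle_type (fibre_map p m G) (vecs p (Suc m)) l = (\<Sum>i<p. cycle_type (G i) (vecs p m) l)"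
proof -
  let ?f = "fibre_map p m G"
  have orbit_Cons: "orbit ?f (i # x) = Cons i ` orbit (G i) x" if "i < p" "x \<in> vecs p m" for i x
    by (rule orbit_conj[OF perm[OF that(1)] finite_vecs that(2)]) (simp add: that(1))
  have "cycle_type ?f (\<Union>i<p. Cons i ` vecs p m) l = (\<Sum>i<p. cycle_type ?f (Cons i ` vecs p m) l)"
  proof (rule cycle_type_UN)
    fix i y assume "i \<in> {..<p}" "y \<in> Cons i ` vecs p m"
    then obtain x where i: "i < p" and x: "x \<in> vecs p m" "y = i # x" by blast
    have "x \<in> orbit (G i) x" using permutes_self_in_orbit[OF perm[OF i] finite_vecs] .
    moreover have "orbit (G i) x \<subseteq> vecs p m" using permutes_orbit_subset[OF perm[OF i] x(1)] .
    ultimately show "y \<in> orbit ?f y \<and> orbit ?f y \<subseteq> Cons i ` vecs p m"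
      using orbit_Cons[OF i x(1)] x(2) by blast
  qed (auto simp: disjoint_family_on_def finite_vecs)
  also have "\<dots> = (\<Sum>i<p. cycle_type (G i) (vecs p m) l)"
  proof (rule sum.cong[OF refl])
    fix i assume "i \<in> {..<p}"
    then have i: "i < p" by simp
    have "bij_betw (Cons i) (vecs p m) (Cons i ` vecs p m)" by (simp add: bij_betw_def)
    then show "cycle_type ?f (Cons i ` vecs p m) l = cycle_type (G i) (vecs p m) l"
      by (rule fun_cong[OF cycle_type_conj[OF perm[OF i] finite_vecs]]) (simp add: i)
  qed
  finally show ?thesis unfolding vecs_Suc .
qed

definition cycle_lift :: "nat \<Rightarrow> nat \<Rightarrow> (nat list \<Rightarrow> nat list) \<Rightarrow> nat list \<Rightarrow> nat list" where
  "cycle_lift p m g x = (if x \<in> vecs p (Suc m)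
     then Suc (hd x) mod p # (if hd x = 0 then g (tl x) else tl x) else x)"

lemma cycle_lift_Cons [simp]:
  "i < p \<Longrightarrow> xs \<in> vecs p m \<Longrightarrow>
    cycle_lift p m g (i # xs) = Suc i mod p # (if i = 0 then g xs else xs)"
  by (simp add: cycle_lift_def)

lemma permutes_cycle_lift:
  assumes "0 < p" "g permutes vecs p m"
  shows "cycle_lift p m g permutes vecs p (Suc m)"
proof (rule permutes_finiteI[OF finite_vecs])
  show "cycle_lift p m g x \<in> vecs p (Suc m)" if "x \<in> vecs p (Suc m)" for x
    by (rule vecs_SucE[OF that]) (simp add: assms permutes_in_image)
  show "cycle_lift p m g x = x" if "x \<notin> vecs p (Suc m)" for x
    using that by (simp add: cycle_lift_def)
  show "inj_on (cycle_lift p m g) (vecs p (Suc m))"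
  proof (rule inj_on_vecs_SucI)
    fix i j xs ys
    assume i: "i < p" "xs \<in> vecs p m" and j: "j < p" "ys \<in> vecs p m"
      and eq: "cycle_lift p m g (i # xs) = cycle_lift p m g (j # ys)"
    then have "(i + 1) mod p = (j + 1) mod p" by simp
    then have "i = j" using mod_add_right_inj i(1) j(1) by blast
    moreover from eq i j have "(if i = 0 then g xs else xs) = (if j = 0 then g ys else ys)" by simp
    ultimately show "i = j \<and> xs = ys"
      using inj_onD[OF permutes_inj_on[OF assms(2)]] i(2) j(2) by (auto split: if_splits)
  qed
qed

lemma complete_mapping_cycle_lift:
  assumes "odd p" and g: "complete_mapping_on (vadd p) (vecs p m) g"
  shows "complete_mapping_on (vadd p) (vecs p (Suc m)) (cycle_lift p m g)"
proof (rule complete_mapping_on_vecsI)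
  show "0 < p" using \<open>odd p\<close> by (simp add: odd_pos)
  then show "cycle_lift p m g permutes vecs p (Suc m)"
    using permutes_cycle_lift complete_mapping_onD(1)[OF g] by blast
  show "inj_on (\<lambda>x. vadd p (cycle_lift p m g x) x) (vecs p (Suc m))"
  proof (rule inj_on_vecs_SucI)
    fix i j xs ys
    assume i: "i < p" "xs \<in> vecs p m" and j: "j < p" "ys \<in> vecs p m"
      and eq: "vadd p (cycle_lift p m g (i # xs)) (i # xs) = vadd p (cycle_lift p m g (j # ys)) (j # ys)"
    have head: "(Suc a mod p + a) mod p = (2 * a + 1) mod p" for a
      by (simp add: mod_add_left_eq mult_2)
    from eq have "(2 * i + 1) mod p = (2 * j + 1) mod p"
      using i j by (simp add: head)
    then have "i = j" using odd_mod_double_add_inj[OF \<open>odd p\<close> i(1) j(1)] by blast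
    moreover have "xs = ys"
    proof (cases "i = 0")
      case True
      then have "vadd p (g xs) xs = vadd p (g ys) ys" using eq \<open>i = j\<close> i j by simp
      then show ?thesis using inj_onD[OF complete_mapping_onD(2)[OF g]] i j by blast
    next
      case False
      then have "vadd p xs xs = vadd p ys ys" using eq \<open>i = j\<close> i j by simp
      then show ?thesis using vadd_self_inj[OF \<open>odd p\<close> i(2) j(2)] by blast
    qed
    ultimately show "i = j \<and> xs = ys" ..
  qed
qed

lemma cycle_lift_funpow:
  assumes "0 < j" "j \<le> p" "ys \<in> vecs p m" "g ys \<in> vecs p m"
  shows "(cycle_lift p m g ^^ j) (0 # ys) = j mod p # g ys"
  using assms(1,2)
proof (induction j)
  case 0 then show ?case by simp
next
  case (Suc j)
  show ?case
  proof (cases "j = 0")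
    case True then show ?thesis using Suc.prems assms(3) by simp
  next
    case False
    then have "(cycle_lift p m g ^^ Suc j) (0 # ys) = cycle_lift p m g (j # g ys)"
      using Suc by simp
    also have "\<dots> = Suc j mod p # g ys" using False Suc.prems assms(4) by simp
    finally show ?thesis .
  qed
qed

lemma cyclic_on_cycle_lift:
  assumes "1 < p" and g: "g permutes vecs p m" "cyclic_on g (vecs p m)"
  shows "cyclic_on (cycle_lift p m g) (vecs p (Suc m))"
proof -
  let ?f = "cycle_lift p m g"
  obtain z where z: "z \<in> vecs p m" "orbit g z = vecs p m"
    using g(2) by (auto simp: cyclic_on_def)
  have lift: "i # g ys \<in> orbit ?f (0 # ys)" if "i < p" "ys \<in> vecs p m" for i ys
  proof -
    let ?j = "if i = 0 then p else i"
    have "i # g ys = (?f ^^ ?j) (0 # ys)"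
      using cycle_lift_funpow[of ?j p ys m g] that assms(1) permutes_in_image[OF g(1)] by auto
    moreover have "0 < ?j" using assms(1) by simp
    ultimately show ?thesis unfolding orbit_altdef by blast
  qed
  have zero: "0 # ys \<in> orbit ?f (0 # z)" if "ys \<in> orbit g z" for ys
    using that
  proof (induction rule: orbit.induct)
    case base
    show ?case using lift[of 0 z] assms(1) z(1) by simp
  next
    case (step ys)
    then have "ys \<in> vecs p m" using z(2) by blast
    then have "0 # g ys \<in> orbit ?f (0 # ys)" using lift[of 0 ys] assms(1) by simp
    then show ?case using step.IH orbit_trans by fast
  qed
  have "vecs p (Suc m) \<subseteq> orbit ?f (0 # z)"
  proof
    fix x assume "x \<in> vecs p (Suc m)"
    then obtain i w where x: "x = i # w" "i < p" "w \<in> vecs p m" by (rule vecs_SucE)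
    then obtain ys where ys: "ys \<in> vecs p m" "w = g ys"
      using permutes_image[OF g(1)] by (metis imageE)
    have "x \<in> orbit ?f (0 # ys)" using lift[OF x(2) ys(1)] x(1) ys(2) by simp
    moreover have "0 # ys \<in> orbit ?f (0 # z)" using zero ys(1) z(2) by blast
    ultimately show "x \<in> orbit ?f (0 # z)" using orbit_trans by fast
  qed
  moreover have z0: "0 # z \<in> vecs p (Suc m)" using z(1) assms(1) by simp
  moreover have "orbit ?f (0 # z) \<subseteq> vecs p (Suc m)"
    using permutes_orbit_subset[OF permutes_cycle_lift z0] g(1) assms(1) by simp
  ultimately show ?thesis by (intro cyclic_on_singleI) auto
qed

primrec long_cycle :: "nat \<Rightarrow> nat \<Rightarrow> nat list \<Rightarrow> nat list" where
  "long_cycle p 0 = id"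
| "long_cycle p (Suc m) = cycle_lift p m (long_cycle p m)"

lemma permutes_long_cycle: "0 < p \<Longrightarrow> long_cycle p m permutes vecs p m"
  by (induction m) (simp_all add: permutes_cycle_lift)

lemma complete_mapping_long_cycle:
  assumes "odd p"
  shows "complete_mapping_on (vadd p) (vecs p m) (long_cycle p m)"
proof (induction m)
  case 0
  show ?case by (simp add: complete_mapping_on_def bij_betw_def vecs_0 vadd_def id_def)
next
  case (Suc m)
  then show ?case using complete_mapping_cycle_lift[OF assms] by simp
qed

lemma cyclic_on_long_cycle:
  assumes "1 < p"
  shows "cyclic_on (long_cycle p m) (vecs p m)"
proof (induction m)
  case 0
  have "orbit id [] = {[]}" by (simp add: orbit_eq_singleton_iff)
  then have "cyclic_on id {[]}" by (intro cyclic_on_singleI[of "[]"]) auto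
  then show ?case by (simp add: vecs_0 id_def)
next
  case (Suc m)
  then show ?case
    using cyclic_on_cycle_lift[OF assms permutes_long_cycle] assms by simp
qed

lemma cycle_type_long_cycle:
  "1 < p \<Longrightarrow> cycle_type (long_cycle p m) (vecs p m) = count {#p ^ m#}"
  using cycle_type_cyclic_on[OF cyclic_on_long_cycle] by (simp add: card_vecs)

section \<open>Splitting multisets of powers\<close>

lemma member_le_sum_mset: "(x::nat) \<in># M \<Longrightarrow> x \<le> sum_mset M"
  by (metis le_add1 multi_member_split sum_mset.add_mset)

lemma sum_mset_eq_member_imp_singleton:
  fixes M :: "nat multiset"
  assumes "x \<in># M" "sum_mset M = x" "0 \<notin># M"
  shows "M = {#x#}"
proof -
  obtain N where N: "M = add_mset x N" using multi_member_split[OF assms(1)] by blast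
  have "N = {#}"
  proof (rule ccontr)
    assume "N \<noteq> {#}"
    then obtain y where y: "y \<in># N" by (meson multiset_nonemptyE)
    then have "y \<le> sum_mset N" by (rule member_le_sum_mset)
    moreover have "sum_mset N = 0" using N assms(2) by simp
    moreover have "y \<noteq> 0" using y N assms(3) by (metis union_iff add_mset_add_single)
    ultimately show False by simp
  qed
  then show ?thesis using N by simp
qed

lemma extract_power_sum:
  fixes M :: "nat multiset"
  assumes "\<forall>x\<in>#M. \<exists>j\<le>n. x = p ^ j" "p ^ n \<le> sum_mset M"
  shows "\<exists>M'. M' \<subseteq># M \<and> sum_mset M' = p ^ n"
  using assms
proof (induction n arbitrary: M)
  case 0
  then have "M \<noteq> {#}" by auto
  then obtain x where x: "x \<in># M" by (meson multiset_nonemptyE)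
  then have "x = 1" using "0.prems"(1) by auto
  then show ?case using x by (intro exI[of _ "{#x#}"]) simp
next
  case (Suc n)
  note IH = Suc.IH
  show ?case
  proof (cases "p ^ Suc n \<in># M")
    case True
    then show ?thesis by (intro exI[of _ "{#p ^ Suc n#}"]) simp
  next
    case False
    have small: "\<forall>x\<in>#M. \<exists>j\<le>n. x = p ^ j"
    proof
      fix x assume x: "x \<in># M"
      then obtain j where j: "j \<le> Suc n" "x = p ^ j" using Suc.prems(1) by blast
      moreover have "j \<noteq> Suc n" using False x j(2) by auto
      ultimately show "\<exists>j\<le>n. x = p ^ j" by (intro exI[of _ j]) simp
    qed
    have "\<exists>M'. M' \<subseteq># M \<and> sum_mset M' = c * p ^ n" if "c \<le> p" for c
      using that
    proof (induction c)
      case 0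
      then show ?case by (intro exI[of _ "{#}"]) simp
    next
      case (Suc c)
      then obtain M' where M': "M' \<subseteq># M" "sum_mset M' = c * p ^ n" by auto
      have "Suc c * p ^ n \<le> p * p ^ n" using Suc.prems by (intro mult_right_mono) auto
      then have "Suc c * p ^ n \<le> sum_mset M" using \<open>p ^ Suc n \<le> sum_mset M\<close> by simp
      then have "p ^ n \<le> sum_mset (M - M')" using sum_mset_diff[OF M'(1)] M'(2) by simp
      moreover have "\<forall>x\<in>#M - M'. \<exists>j\<le>n. x = p ^ j" using small by (meson in_diffD)
      ultimately obtain M'' where M'': "M'' \<subseteq># M - M'" "sum_mset M'' = p ^ n"
        using IH by blast
      have "M' + M'' \<subseteq># M"
        using M'(1) M''(1) by (metis subset_mset.le_diff_conv2 add.commute)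
      then show ?case using M'(2) M''(2) by (intro exI[of _ "M' + M''"]) simp
    qed
    from this[of p] show ?thesis by simp
  qed
qed

lemma split_power_sum:
  fixes M :: "nat multiset"
  assumes "0 < p" "\<forall>x\<in>#M. \<exists>j\<le>n. x = p ^ j" "sum_mset M = a * p ^ n"
  shows "\<exists>Ms. (\<forall>i<a. sum_mset (Ms i) = p ^ n) \<and> M = (\<Sum>i<a. Ms i)"
  using assms(2,3)
proof (induction a arbitrary: M)
  case 0
  then have "\<forall>x\<in>#M. x = 0" by simp
  moreover have "\<forall>x\<in>#M. x \<noteq> 0" using "0.prems"(1) assms(1) by auto
  ultimately have "set_mset M = {}" by blast
  then show ?case by simp
next
  case (Suc a)
  obtain M' where M': "M' \<subseteq># M" "sum_mset M' = p ^ n"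
    using extract_power_sum[OF Suc.prems(1)] Suc.prems(2) by auto
  have "sum_mset (M - M') = a * p ^ n" using sum_mset_diff[OF M'(1)] M'(2) Suc.prems(2) by simp
  moreover have "\<forall>x\<in>#M - M'. \<exists>j\<le>n. x = p ^ j" using Suc.prems(1) by (meson in_diffD)
  ultimately obtain Ms where Ms: "\<forall>i<a. sum_mset (Ms i) = p ^ n" "M - M' = (\<Sum>i<a. Ms i)"
    using Suc.IH by blast
  have "M = (\<Sum>i<Suc a. (Ms(a := M')) i)"
    using Ms(2) subset_mset.diff_add[OF M'(1)] by simp
  moreover have "\<forall>i<Suc a. sum_mset ((Ms(a := M')) i) = p ^ n" using Ms(1) M'(2) by simp
  ultimately show ?case by blast
qed


lemma power_sum_cases:
  fixes M :: "nat multiset"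
  assumes "1 < p" and powers: "\<forall>x\<in>#M. \<exists>j. x = p ^ j" and sum: "sum_mset M = p ^ m"
  obtains "M = {#p ^ m#}"
    | m' where "m = Suc m'" and "\<forall>x\<in>#M. \<exists>j\<le>m'. x = p ^ j"
proof (cases "p ^ m \<in># M")
  case True
  have "0 \<notin># M" using powers assms(1) by auto
  with True sum have "M = {#p ^ m#}" by (intro sum_mset_eq_member_imp_singleton)
  then show ?thesis by (rule that(1))
next
  case False
  have below: "\<exists>j<m. x = p ^ j" if x: "x \<in># M" for x
  proof -
    obtain j where j: "x = p ^ j" using powers x by blast
    have "p ^ j \<le> p ^ m" using member_le_sum_mset[OF x] sum j by simp
    then have "j \<le> m" using power_le_imp_le_exp[OF assms(1)] by blast
    moreover have "j \<noteq> m" using False x j by auto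
    ultimately have "j < m" by simp
    then show ?thesis using j by blast
  qed
  have "M \<noteq> {#}" using sum assms(1) by auto
  then obtain x where "x \<in># M" by (meson multiset_nonemptyE)
  then obtain j where "j < m" using below by blast
  then obtain m' where m: "m = Suc m'" by (cases m) auto
  moreover have "\<forall>x\<in>#M. \<exists>j\<le>m'. x = p ^ j" using below m by (auto simp: less_Suc_eq_le)
  ultimately show ?thesis by (rule that(2))
qed

section \<open>Complete mappings of \<open>(\<int>/p)\<^sup>m\<close> with prescribed cycle type\<close>

lemma complete_mapping_with_cycle_type:
  fixes M :: "nat multiset"
  assumes "odd p" "1 < p" and "\<forall>x\<in>#M. \<exists>j. x = p ^ j" and "sum_mset M = p ^ m"
  shows "\<exists>g. complete_mapping_on (vadd p) (vecs p m) g \<and> cycle_type g (vecs p m) = count M"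
  using assms(3,4)
proof (induction m arbitrary: M rule: less_induct)
  case (less m)
  from assms(2) less.prems show ?case
  proof (cases rule: power_sum_cases)
    case 1
    then have "cycle_type (long_cycle p m) (vecs p m) = count M"
      using cycle_type_long_cycle[OF assms(2)] by simp
    then show ?thesis using complete_mapping_long_cycle[OF assms(1)] by blast
  next
    case (2 m')
    have "0 < p" using assms(2) by simp
    moreover have "sum_mset M = p * p ^ m'" using less.prems(2) 2(1) by simp
    ultimately obtain Ms where Ms: "\<forall>i<p. sum_mset (Ms i) = p ^ m'" and M: "M = (\<Sum>i<p. Ms i)"
      using split_power_sum[OF _ 2(2)] by blast
    have parts: "\<forall>i\<in>{..<p}. \<exists>g. complete_mapping_on (vadd p) (vecs p m') g \<and>
        cycle_type g (vecs p m') = count (Ms i)"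
    proof
      fix i assume i: "i \<in> {..<p}"
      show "\<exists>g. complete_mapping_on (vadd p) (vecs p m') g \<and> cycle_type g (vecs p m') = count (Ms i)"
      proof (rule less.IH)
        show "m' < m" using 2(1) by simp
        have "set_mset (Ms i) \<subseteq> set_mset M" using M i by (auto simp: set_mset_sum)
        then show "\<forall>x\<in>#Ms i. \<exists>j. x = p ^ j" using less.prems(1) by blast
        show "sum_mset (Ms i) = p ^ m'" using Ms i by simp
      qed
    qed
    obtain G where "\<forall>i\<in>{..<p}. complete_mapping_on (vadd p) (vecs p m') (G i) \<and>
        cycle_type (G i) (vecs p m') = count (Ms i)"
      using bchoice[OF parts] by blast
    then have G: "\<And>i. i < p \<Longrightarrow> complete_mapping_on (vadd p) (vecs p m') (G i)"
      and G_type: "\<And>i. i < p \<Longrightarrow> cycle_type (G i) (vecs p m') = count (Ms i)"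
      by auto
    have "cycle_type (fibre_map p m' G) (vecs p (Suc m')) l = count M l" for l
    proof -
      have "cycle_type (fibre_map p m' G) (vecs p (Suc m')) l
          = (\<Sum>i<p. cycle_type (G i) (vecs p m') l)"
        using complete_mapping_onD(1)[OF G] by (rule cycle_type_fibre_map)
      also have "\<dots> = (\<Sum>i<p. count (Ms i) l)" using G_type by simp
      also have "\<dots> = count M l" using M by (simp add: count_sum)
      finally show ?thesis .
    qed
    moreover have "complete_mapping_on (vadd p) (vecs p (Suc m')) (fibre_map p m' G)"
      using assms(1) G by (rule complete_mapping_fibre_map)
    ultimately show ?thesis unfolding 2(1) by blast
  qed
qed

section \<open>Additive isomorphism of \<open>(\<int>/p)\<^sup>m\<close> with a ring of characteristic \<open>p\<close>\<close>

lemma CHAR_eq_prime_of_card: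
  assumes "prime p" "card (UNIV :: 'a::{idom,finite} set) = p ^ k"
  shows "CHAR('a) = p"
proof -
  have "prime CHAR('a)" by (intro prime_CHAR_semidom finite_imp_CHAR_pos) simp
  moreover have "CHAR('a) dvd p ^ k" using CHAR_dvd_CARD[where 'a='a] assms(2) by simp
  ultimately have "CHAR('a) dvd p" using prime_dvd_power by blast
  then show ?thesis using \<open>prime CHAR('a)\<close> assms(1) primes_dvd_imp_eq by blast
qed

lemma of_nat_mod_CHAR: "of_nat (n mod CHAR('a)) = (of_nat n :: 'a::ring_1)"
  by (simp add: of_nat_eq_iff_cong_CHAR cong_def)

lemma of_nat_inverse_CHAR:
  assumes "prime CHAR('a)" "\<not> CHAR('a) dvd d"
  shows "of_nat (d ^ (CHAR('a) - 2)) * of_nat d = (1::'a::ring_1)"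
proof -
  have "[d ^ (CHAR('a) - 1) = 1] (mod CHAR('a))" using fermat_theorem[OF assms] .
  then have "of_nat (d ^ (CHAR('a) - 1)) = (1::'a)"
    using of_nat_eq_iff_cong_CHAR[of "d ^ (CHAR('a) - 1)" 1, where 'a='a] by simp
  moreover have "CHAR('a) - 1 = Suc (CHAR('a) - 2)" using prime_ge_2_nat[OF assms(1)] by arith
  then have "d ^ (CHAR('a) - 1) = d ^ (CHAR('a) - 2) * d" by (simp add: power_Suc2)
  ultimately show ?thesis by (metis of_nat_mult)
qed

lemma of_nat_CHAR_minus_one:
  assumes "0 < CHAR('a)"
  shows "of_nat (CHAR('a) - 1) = (-1::'a::ring_1)"
proof -
  have "of_nat (CHAR('a) - 1) + 1 = (of_nat CHAR('a) :: 'a)" using assms by (simp add: of_nat_diff)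
  then show ?thesis by (simp add: eq_neg_iff_add_eq_0)
qed

text \<open>\<open>S\<close> is closed under multiplication by naturals, hence under negation, and \<open>d\<close> has a
  natural inverse modulo the characteristic; so \<open>d b + s \<in> S\<close> would force \<open>b \<in> S\<close>.\<close>

lemma of_nat_mult_add_notin:
  fixes S :: "'a::ring_1 set"
  assumes p: "prime CHAR('a)" and "0 \<in> S" and plus: "\<And>s t. s \<in> S \<Longrightarrow> t \<in> S \<Longrightarrow> s + t \<in> S"
    and "b \<notin> S" "s \<in> S" "\<not> CHAR('a) dvd d"
  shows "of_nat d * b + s \<notin> S"
proof
  assume shifted: "of_nat d * b + s \<in> S"
  have nat_mult: "of_nat n * t \<in> S" if "t \<in> S" for t n
  proof (induction n)
    case 0
    show ?case using \<open>0 \<in> S\<close> by simp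
  next
    case (Suc n)
    have "of_nat (Suc n) * t = t + of_nat n * t" by (simp add: distrib_right)
    then show ?case using plus[OF that Suc.IH] by simp
  qed
  have "of_nat d * b = (of_nat d * b + s) + of_nat (CHAR('a) - 1) * s"
    by (simp only: of_nat_CHAR_minus_one[OF prime_gt_0_nat[OF p]]) simp
  also have "\<dots> \<in> S" using plus[OF shifted nat_mult[OF \<open>s \<in> S\<close>]] .
  finally have "of_nat d * b \<in> S" .
  then have "of_nat (d ^ (CHAR('a) - 2)) * (of_nat d * b) \<in> S" by (rule nat_mult)
  then show False
    using of_nat_inverse_CHAR[OF p \<open>\<not> CHAR('a) dvd d\<close>] \<open>b \<notin> S\<close> by (simp add: mult.assoc[symmetric])
qed

lemma additive_image_vecs:
  fixes \<phi> :: "nat list \<Rightarrow> 'a::group_add"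
  assumes "0 < p" and add: "\<And>x y. x \<in> vecs p m \<Longrightarrow> y \<in> vecs p m \<Longrightarrow> \<phi> (vadd p x y) = \<phi> x + \<phi> y"
  shows "0 \<in> \<phi> ` vecs p m"
    and "s \<in> \<phi> ` vecs p m \<Longrightarrow> t \<in> \<phi> ` vecs p m \<Longrightarrow> s + t \<in> \<phi> ` vecs p m"
proof -
  have zeros: "replicate m 0 \<in> vecs p m" using replicate_in_vecs[OF \<open>0 < p\<close>] .
  have "\<phi> (replicate m 0) = \<phi> (replicate m 0) + \<phi> (replicate m 0)"
    using add[OF zeros zeros] by (simp add: vadd_replicate_0)
  then have "\<phi> (replicate m 0) + 0 = \<phi> (replicate m 0) + \<phi> (replicate m 0)" by simp
  then have "0 = \<phi> (replicate m 0)" by (rule add_left_imp_eq)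
  then show "0 \<in> \<phi> ` vecs p m" using zeros by (rule image_eqI)
  assume "s \<in> \<phi> ` vecs p m" "t \<in> \<phi> ` vecs p m"
  then obtain x y where xy: "x \<in> vecs p m" "y \<in> vecs p m" and "s = \<phi> x" "t = \<phi> y" by blast
  then have "s + t = \<phi> (vadd p x y)" using add by simp
  moreover have "vadd p x y \<in> vecs p m" using vadd_in_vecs[OF \<open>0 < p\<close> xy] .
  ultimately show "s + t \<in> \<phi> ` vecs p m" by (rule image_eqI)
qed

lemma additive_embedding_vecs_Suc:
  fixes \<phi> :: "nat list \<Rightarrow> 'a::ring_1"
  assumes p: "prime p" "CHAR('a) = p" and inj: "inj_on \<phi> (vecs p m)"
    and add: "\<And>x y. x \<in> vecs p m \<Longrightarrow> y \<in> vecs p m \<Longrightarrow> \<phi> (vadd p x y) = \<phi> x + \<phi> y"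
    and b: "b \<notin> \<phi> ` vecs p m"
  defines "\<psi> \<equiv> \<lambda>xs. of_nat (hd xs) * b + \<phi> (tl xs)"
  shows "inj_on \<psi> (vecs p (Suc m))"
    and "\<And>x y. x \<in> vecs p (Suc m) \<Longrightarrow> y \<in> vecs p (Suc m) \<Longrightarrow> \<psi> (vadd p x y) = \<psi> x + \<psi> y"
proof -
  have "0 < p" using prime_gt_0_nat[OF p(1)] .
  have zero: "0 \<in> \<phi> ` vecs p m" by (rule additive_image_vecs(1)[OF \<open>0 < p\<close>]) (rule add)
  have plus: "s + t \<in> \<phi> ` vecs p m" if "s \<in> \<phi> ` vecs p m" "t \<in> \<phi> ` vecs p m" for s t
    by (rule additive_image_vecs(2)[OF \<open>0 < p\<close> _ that]) (rule add)
  have no_shift: "of_nat d * b + \<phi> xs \<noteq> \<phi> ys"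
    if "0 < d" "d < p" "xs \<in> vecs p m" "ys \<in> vecs p m" for d xs ys
  proof -
    have "prime CHAR('a)" "\<not> CHAR('a) dvd d" using that p by (simp_all add: nat_dvd_not_less)
    then have "of_nat d * b + \<phi> xs \<notin> \<phi> ` vecs p m"
      using of_nat_mult_add_notin[OF _ zero plus b] that(3) by blast
    then show ?thesis using that(4) by auto
  qed
  show "inj_on \<psi> (vecs p (Suc m))"
  proof (rule inj_on_vecs_SucI)
    fix i j xs ys
    assume i: "i < p" "xs \<in> vecs p m" and j: "j < p" "ys \<in> vecs p m"
      and "\<psi> (i # xs) = \<psi> (j # ys)"
    then have eq: "of_nat i * b + \<phi> xs = of_nat j * b + \<phi> ys" by (simp add: \<psi>_def)
    consider "i < j" | "j < i" | "i = j" by linarith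
    then show "i = j \<and> xs = ys"
    proof cases
      case 1
      then have "of_nat (j - i) * b + \<phi> ys = \<phi> xs"
        using eq by (simp add: of_nat_diff algebra_simps)
      moreover have "0 < j - i" "j - i < p" using 1 j(1) by simp_all
      ultimately show ?thesis using no_shift j(2) i(2) by blast
    next
      case 2
      then have "of_nat (i - j) * b + \<phi> xs = \<phi> ys"
        using eq by (simp add: of_nat_diff algebra_simps)
      moreover have "0 < i - j" "i - j < p" using 2 i(1) by simp_all
      ultimately show ?thesis using no_shift i(2) j(2) by blast
    next
      case 3
      then show ?thesis using eq inj_onD[OF inj] i j by simp
    qed
  qed
  show "\<psi> (vadd p x y) = \<psi> x + \<psi> y" if x: "x \<in> vecs p (Suc m)" and y: "y \<in> vecs p (Suc m)" for x y
  proof -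
    from x obtain i xs where x: "x = i # xs" "i < p" "xs \<in> vecs p m" by (rule vecs_SucE)
    from y obtain j ys where y: "y = j # ys" "j < p" "ys \<in> vecs p m" by (rule vecs_SucE)
    have "of_nat ((i + j) mod p) = (of_nat i + of_nat j :: 'a)"
      using of_nat_mod_CHAR[of "i + j", where 'a='a] p(2) by simp
    then show ?thesis using x y add by (simp add: \<psi>_def algebra_simps)
  qed
qed

lemma additive_embedding_vecs:
  assumes "prime p" "CHAR('a) = p" "p ^ m \<le> card (UNIV :: 'a::{ring_1,finite} set)"
  shows "\<exists>\<phi> :: nat list \<Rightarrow> 'a. inj_on \<phi> (vecs p m) \<and>
    (\<forall>x\<in>vecs p m. \<forall>y\<in>vecs p m. \<phi> (vadd p x y) = \<phi> x + \<phi> y)"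
  using assms(3)
proof (induction m)
  case 0
  show ?case by (intro exI[of _ "\<lambda>_. 0"]) (simp add: vecs_0)
next
  case (Suc m)
  have "p ^ m < p ^ Suc m" using prime_gt_1_nat[OF assms(1)] by simp
  then have "p ^ m < card (UNIV :: 'a set)" using Suc.prems by linarith
  then obtain \<phi> :: "nat list \<Rightarrow> 'a" where inj: "inj_on \<phi> (vecs p m)"
    and add: "\<forall>x\<in>vecs p m. \<forall>y\<in>vecs p m. \<phi> (vadd p x y) = \<phi> x + \<phi> y"
    using Suc.IH by auto
  have "card (\<phi> ` vecs p m) < card (UNIV :: 'a set)"
    using card_image[OF inj] card_vecs \<open>p ^ m < card (UNIV :: 'a set)\<close> by simp
  then have "\<phi> ` vecs p m \<noteq> UNIV" by auto
  then obtain b where b: "b \<notin> \<phi> ` vecs p m" by blast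
  have "\<And>x y. x \<in> vecs p m \<Longrightarrow> y \<in> vecs p m \<Longrightarrow> \<phi> (vadd p x y) = \<phi> x + \<phi> y"
    using add by blast
  note extend = additive_embedding_vecs_Suc[OF assms(1,2) inj this b]
  show ?case by (intro exI[of _ "\<lambda>xs. of_nat (hd xs) * b + \<phi> (tl xs)"] conjI ballI extend)
qed

lemma additive_bij_vecs:
  assumes "prime p" "CHAR('a) = p" "card (UNIV :: 'a set) = p ^ m"
  obtains \<phi> :: "nat list \<Rightarrow> 'a::{ring_1,finite}" where "bij_betw \<phi> (vecs p m) UNIV"
    and "\<And>x y. x \<in> vecs p m \<Longrightarrow> y \<in> vecs p m \<Longrightarrow> \<phi> (vadd p x y) = \<phi> x + \<phi> y"
proof -
  obtain \<phi> :: "nat list \<Rightarrow> 'a" where inj: "inj_on \<phi> (vecs p m)"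
    and add: "\<forall>x\<in>vecs p m. \<forall>y\<in>vecs p m. \<phi> (vadd p x y) = \<phi> x + \<phi> y"
    using additive_embedding_vecs[OF assms(1,2), of m] assms(3) by auto
  have "\<phi> ` vecs p m = UNIV"
    by (rule card_subset_eq) (simp_all add: card_image[OF inj] card_vecs assms(3))
  then show ?thesis using that inj add by (simp add: bij_betw_def)
qed

theorem corollary1p4:
  fixes p k :: nat and S :: "(nat \<Rightarrow> nat) set" and s :: "nat \<Rightarrow> nat"
  assumes "prime p" and "k \<ge> 1" and "odd (p ^ k)"
    and "card (UNIV :: 'a set) = p ^ k"
    and "sylow_subgroup (sym_group (p ^ k)) p S"
    and "s \<in> S"
  shows "\<exists>f :: 'a::{field,finite} \<Rightarrow> 'a. complete_mapping f \<and>
           cycle_type f UNIV = cycle_type s {1..p ^ k}"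
proof -
  have "odd p" "1 < p" using assms(1-3) prime_gt_1_nat by auto
  have "s \<in> carrier (sym_group (p ^ k))"
    using assms(5,6) subgroup.subset by (auto simp: sylow_subgroup_def)
  then have s: "s permutes {1..p ^ k}" by (simp add: sym_group_carrier)
  let ?M = "cycle_type_mset s {1..p ^ k}"
  have "\<forall>x\<in>#?M. \<exists>j. x = p ^ j"
    using sylow_card_orbit_prime_power[OF assms(1,5,6)] by (auto simp: set_mset_cycle_type_mset)
  moreover have "sum_mset ?M = p ^ k" using sum_cycle_type_mset[OF s] by simp
  ultimately obtain g where g: "complete_mapping_on (vadd p) (vecs p k) g"
    and g_type: "cycle_type g (vecs p k) = count ?M"
    using complete_mapping_with_cycle_type[OF \<open>odd p\<close> \<open>1 < p\<close>] by blast
  obtain \<phi> :: "nat list \<Rightarrow> 'a" where \<phi>: "bij_betw \<phi> (vecs p k) UNIV"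
    and add: "\<And>x y. x \<in> vecs p k \<Longrightarrow> y \<in> vecs p k \<Longrightarrow> \<phi> (vadd p x y) = \<phi> x + \<phi> y"
    using additive_bij_vecs[OF assms(1) CHAR_eq_prime_of_card[OF assms(1,4)] assms(4)] by blast
  show ?thesis
    using complete_mapping_transfer[OF \<phi> finite_vecs add g] g_type
    by (auto simp: count_cycle_type_mset)
qed

end
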